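(* Suppose $f$ is globally Lipschitz continuous on $\mathbb{R}^{n\times p}$. Then for every $\beta>0$, the function $h$ is bounded below on $\mathbb{R}^{n\times p}$.
   Context: $f:\mathbb{R}^{n\times p}\to\mathbb{R}$ is differentiable with $f$ and $\nabla f$ locally Lipschitz. $\mathcal{A}(X):=\frac32I_p-\frac12X^\top X$, and $h(X):=f(X\mathcal{A}(X))+\frac{\beta}{4}\|X^\top X-I_p\|_F^2$. *)

theory Defs
  imports "HOL-Analysis.Analysis"
begin

text \<open>Matrices in R^(n x p) are rendered as real^'p^'n (n rows, p columns).
  The norm on this type is the Frobenius norm and the inner product is the
  Frobenius inner product.\<close>

definition locally_lipschitz :: "('a::metric_space \<Rightarrow> 'b::metric_space) \<Rightarrow> bool" where
  "locally_lipschitz g \<longleftrightarrow> (\<forall>x. \<exists>e>0. \<exists>L. L-lipschitz_on (ball x e) g)"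

definition globally_lipschitz :: "('a::metric_space \<Rightarrow> 'b::metric_space) \<Rightarrow> bool" where
  "globally_lipschitz g \<longleftrightarrow> (\<exists>L. L-lipschitz_on UNIV g)"

definition calA :: "real^'p^'n \<Rightarrow> real^'p^'p" where
  "calA X = (3/2) *\<^sub>R mat 1 - (1/2) *\<^sub>R (transpose X ** X)"

definition hfun :: "(real^'p^'n \<Rightarrow> real) \<Rightarrow> real \<Rightarrow> real^'p^'n \<Rightarrow> real" where
  "hfun f \<beta> X = f (X ** calA X) + (\<beta> / 4) * (norm (transpose X ** X - mat 1))\<^sup>2"

end

theory Submission imports Defs begin

text \<open>Write \<open>D = X\<^sup>T X - I\<close>, \<open>d = \<parallel>D\<parallel>\<close> and \<open>c = \<parallel>I\<^sub>p\<parallel> = \<surd>p\<close>. Since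
  \<open>\<parallel>X\<parallel>\<^sup>2 = tr (X\<^sup>T X) = tr D + p \<le> d c + c\<^sup>2\<close> and \<open>\<A>(X) = I - D/2\<close>, the argument of \<open>f\<close>
  satisfies \<open>\<parallel>X \<A>(X)\<parallel> \<le> \<parallel>X\<parallel> (c + d/2) = O(d\<^sup>3\<^sup>/\<^sup>2)\<close>. A globally Lipschitz \<open>f\<close> can
  therefore decrease at most like \<open>d\<^sup>3\<^sup>/\<^sup>2\<close>, which the penalty \<open>\<beta> d\<^sup>2/4\<close> dominates.\<close>

lemma norm_vec_sq_eq_sum: "(norm (x::real^'n))\<^sup>2 = (\<Sum>i\<in>UNIV. (x$i)\<^sup>2)"
  unfolding power2_norm_eq_inner inner_vec_def by (simp add: power2_eq_square)

lemma norm_matrix_sq_eq_sum: "(norm (X::real^'p^'n))\<^sup>2 = (\<Sum>i\<in>UNIV. \<Sum>j\<in>UNIV. (X$i$j)\<^sup>2)"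
  by (simp add: power2_norm_eq_inner inner_vec_def flip: norm_vec_sq_eq_sum)

lemma norm_matrix_mult_le:
  fixes X :: "real^'k^'n" and Y :: "real^'p^'k"
  shows "norm (X ** Y) \<le> norm X * norm Y"
proof -
  have entry: "((X ** Y)$i$j)\<^sup>2 \<le> (norm (X$i))\<^sup>2 * (norm (column j Y))\<^sup>2" for i j
  proof -
    have "(X ** Y)$i$j = X$i \<bullet> column j Y"
      by (simp add: matrix_matrix_mult_def column_def inner_vec_def)
    then have "\<bar>(X ** Y)$i$j\<bar> \<le> norm (X$i) * norm (column j Y)"
      by (simp add: Cauchy_Schwarz_ineq2)
    then show ?thesis
      by (metis abs_ge_zero power2_abs power_mono power_mult_distrib)
  qed
  have columns: "(\<Sum>j\<in>UNIV. (norm (column j Y))\<^sup>2) = (norm Y)\<^sup>2"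
    by (simp add: norm_matrix_sq_eq_sum norm_vec_sq_eq_sum column_def sum.swap[of _ "UNIV::'p set"])
  have rows: "(\<Sum>i\<in>UNIV. (norm (X$i))\<^sup>2) = (norm X)\<^sup>2"
    by (simp add: power2_norm_eq_inner inner_vec_def)
  have "(norm (X ** Y))\<^sup>2 \<le> (\<Sum>i\<in>UNIV. \<Sum>j\<in>UNIV. (norm (X$i))\<^sup>2 * (norm (column j Y))\<^sup>2)"
    unfolding norm_matrix_sq_eq_sum by (intro sum_mono entry)
  also have "\<dots> = (norm X * norm Y)\<^sup>2"
    by (simp add: sum_product[symmetric] columns rows power_mult_distrib)
  finally show ?thesis
    by (rule power2_le_imp_le) simp
qed

lemma norm_sq_eq_inner_gram_mat_1:
  fixes X :: "real^'p^'n"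
  shows "(norm X)\<^sup>2 = (transpose X ** X) \<bullet> mat 1"
proof -
  have "(transpose X ** X) \<bullet> mat 1 = (\<Sum>i\<in>UNIV. (transpose X ** X)$i$i)"
    by (simp add: inner_vec_def mat_def if_distrib cong: if_cong)
  also have "\<dots> = (\<Sum>i\<in>UNIV. \<Sum>k\<in>UNIV. (X$k$i)\<^sup>2)"
    by (simp add: matrix_matrix_mult_def transpose_def power2_eq_square)
  also have "\<dots> = (norm X)\<^sup>2"
    by (simp add: norm_matrix_sq_eq_sum sum.swap[of _ "UNIV::'p set"])
  finally show ?thesis by simp
qed

lemma norm_sq_le_gram_defect:
  fixes X :: "real^'p^'n"
  shows "(norm X)\<^sup>2 \<le> norm (transpose X ** X - mat 1) * norm (mat 1 :: real^'p^'p)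
    + (norm (mat 1 :: real^'p^'p))\<^sup>2"
proof -
  let ?D = "transpose X ** X - mat 1"
  have "(norm X)\<^sup>2 = ?D \<bullet> mat 1 + (mat 1 :: real^'p^'p) \<bullet> mat 1"
    by (simp add: norm_sq_eq_inner_gram_mat_1 inner_diff_left)
  also have "?D \<bullet> mat 1 \<le> norm ?D * norm (mat 1 :: real^'p^'p)"
    by (rule norm_cauchy_schwarz)
  finally show ?thesis
    by (simp add: power2_norm_eq_inner)
qed

lemma calA_eq: "calA (X :: real^'p^'n) = mat 1 - (1/2) *\<^sub>R (transpose X ** X - mat 1)"
proof -
  have "(3/2::real) *\<^sub>R (mat 1 :: real^'p^'p) = mat 1 + (1/2) *\<^sub>R mat 1"
    using scaleR_add_left[of 1 "1/2" "mat 1 :: real^'p^'p"] by simp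
  then show ?thesis
    unfolding calA_def by (simp add: algebra_simps scaleR_diff_right)
qed

lemma norm_calA_le:
  "norm (calA (X :: real^'p^'n)) \<le> norm (mat 1 :: real^'p^'p) + norm (transpose X ** X - mat 1) / 2"
  unfolding calA_eq by (rule order_trans[OF norm_triangle_ineq4]) simp

lemma penalty_dominates_cubic_growth:
  fixes L \<beta> c :: real
  assumes "L \<ge> 0" "\<beta> > 0" "c \<ge> 0"
  shows "\<exists>M. \<forall>x d. x\<^sup>2 \<le> d * c + c\<^sup>2 \<longrightarrow>
    L * x * (c + d/2) - \<beta>/4 * d\<^sup>2 \<le> M"
proof (intro exI allI impI)
  define K where "K = L\<^sup>2 / (2*\<beta>) + L*c/2"
  fix x d :: real
  assume x_sq: "x\<^sup>2 \<le> d * c + c\<^sup>2"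
  have K_nonneg: "K \<ge> 0"
    using assms unfolding K_def by simp
  \<comment> \<open>Two AM-GM steps turn the cubic term into \<open>\<beta> d\<^sup>2/8\<close> plus a multiple of \<open>x\<^sup>2\<close>.\<close>
  have "L*x*d/2 \<le> \<beta>/8 * d\<^sup>2 + L\<^sup>2 * x\<^sup>2 / (2*\<beta>)"
  proof -
    have "0 \<le> (\<beta>/2 * d - L*x)\<^sup>2 / (2*\<beta>)"
      using assms by simp
    also have "\<dots> = \<beta>/8 * d\<^sup>2 + L\<^sup>2 * x\<^sup>2 / (2*\<beta>) - L*x*d/2"
      using assms by (simp add: power2_eq_square field_simps)
    finally show ?thesis by simp
  qed
  moreover have "L*c*x \<le> L*c * ((1 + x\<^sup>2)/2)"
    using assms sum_squares_ge_zero[of "x - 1" 0]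
    by (intro mult_left_mono) (simp_all add: power2_eq_square algebra_simps)
  ultimately have "L * x * (c + d/2) \<le> \<beta>/8 * d\<^sup>2 + K * x\<^sup>2 + L*c/2"
    unfolding K_def by (simp add: field_simps)
  also have "K * x\<^sup>2 \<le> K * (d * c + c\<^sup>2)"
    using x_sq K_nonneg by (rule mult_left_mono)
  finally have cubic: "L * x * (c + d/2) \<le> \<beta>/8 * d\<^sup>2 + K * (d * c + c\<^sup>2) + L*c/2"
    by simp
  \<comment> \<open>What remains, \<open>K c d - \<beta> d\<^sup>2/8\<close>, is a concave quadratic in \<open>d\<close>.\<close>
  have "K*c*d \<le> \<beta>/8 * d\<^sup>2 + 2 * (K*c)\<^sup>2 / \<beta>"
  proof -
    have "0 \<le> (\<beta>/4 * d - K*c)\<^sup>2 / (\<beta>/2)"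
      using assms by simp
    also have "\<dots> = \<beta>/8 * d\<^sup>2 - K*c*d + 2 * (K*c)\<^sup>2 / \<beta>"
      using assms by (simp add: power2_eq_square field_simps)
    finally show ?thesis by simp
  qed
  with cubic show "L * x * (c + d/2) - \<beta>/4 * d\<^sup>2 \<le> K*c\<^sup>2 + L*c/2 + 2 * (K*c)\<^sup>2 / \<beta>"
    by (simp add: algebra_simps)
qed

theorem mainTheorem6:
  fixes f :: "real^'p^'n \<Rightarrow> real"
    and gradf :: "real^'p^'n \<Rightarrow> real^'p^'n"
    and \<beta> :: real
  assumes grad: "\<And>X. (f has_derivative (\<lambda>H. gradf X \<bullet> H)) (at X)"
    and f_loc: "locally_lipschitz f"
    and grad_loc: "locally_lipschitz gradf"
    and f_glob: "globally_lipschitz f"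
    and beta_pos: "\<beta> > 0"
  shows "bdd_below (range (hfun f \<beta>))"
proof -
  obtain L where L: "L-lipschitz_on UNIV f"
    using f_glob unfolding globally_lipschitz_def by blast
  let ?c = "norm (mat 1 :: real^'p^'p)"
  obtain M where M: "\<And>x d. x\<^sup>2 \<le> d * ?c + ?c\<^sup>2 \<Longrightarrow>
      L * x * (?c + d/2) - \<beta>/4 * d\<^sup>2 \<le> M"
    using penalty_dominates_cubic_growth[OF lipschitz_on_nonneg[OF L] beta_pos norm_ge_zero] by blast
  have "f 0 - M \<le> hfun f \<beta> X" for X :: "real^'p^'n"
  proof -
    let ?d = "norm (transpose X ** X - mat 1)"
    have "f 0 - f (X ** calA X) \<le> L * norm (X ** calA X)"
      using lipschitz_onD[OF L, of "X ** calA X" 0] by (simp add: dist_norm)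
    also have "\<dots> \<le> L * (norm X * (?c + ?d/2))"
      using lipschitz_on_nonneg[OF L]
      by (meson mult_left_mono norm_calA_le norm_ge_zero norm_matrix_mult_le order_trans)
    finally show ?thesis
      using M[OF norm_sq_le_gram_defect[of X]]
      unfolding hfun_def by (simp add: algebra_simps)
  qed
  then show ?thesis
    by (intro bdd_belowI2) blast
qed

end
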